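(* Let $\mathcal N=(\mathcal S,\mathcal C,\mathcal R)$ be a chemical reaction network and let $\tilde{\mathcal N}=(\mathcal S,\tilde{\mathcal C},\mathcal{CR}_K,\tilde{\mathcal R})$ be a weakly resolvable improper translation of $\mathcal N$. Let $\{y_{p_j}-y_{q_j}\}_{j=1}^{\tilde s}$ be a basis of the kinetic-order subspace $\tilde S$ of $\tilde{\mathcal N}$ chosen among the vectors $y_p-y_q$ with $p,q\in\mathcal{CR}_K$ and $h_2(p),h_2(q)$ in the same linkage class of $\tilde{\mathcal N}$. Then for every improper reaction $\mathcal R_i\in\mathcal R_I$ there exist real constants $c_1,\dots,c_{\tilde s}$ such that for all $\mathbf x\in\mathbb R^m_{>0}$ $$\mathbf x^{y_{\rho(i)}}=\tilde K_{\rho(i),\rho(i)_K}(\mathbf x)\;\mathbf x^{y_{\rho(i)_K}},\qquad \tilde K_{\rho(i),\rho(i)_K}(\mathbf x)=\prod_{j=1}^{\tilde s}\left(\frac{\mathbf x^{y_{p_j}}}{\mathbf x^{y_{q_j}}}\right)^{c_j}.$$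
   Context: A chemical reaction network $\mathcal N=(\mathcal S,\mathcal C,\mathcal R)$ consists of species $\mathcal A_1,\dots,\mathcal A_m$, pairwise distinct complexes $\mathcal C_1,\dots,\mathcal C_n$ with stoichiometric vectors $y_1,\dots,y_n\in\mathbb Z^m_{\ge 0}$, and reactions $\mathcal R_1,\dots,\mathcal R_r$, where $\mathcal R_i$ is $\mathcal C_{\rho(i)}\to\mathcal C_{\rho'(i)}$ with $\rho(i)\neq\rho'(i)$; every species appears in some complex and every complex in some reaction. Complexes and reactions are identified with their indices; $\mathcal{CR}=\{\rho(i)\}$ is the reactant complex set; $\mathbf x^{y}=\prod_j x_j^{y_j}$. Linkage classes are the connected components of the underlying undirected reaction graph (vertices complexes, edges reactions); a network is weakly reversible if for every reaction $\mathcal C_a\to\mathcal C_b$ there is a directed path of reactions from $\mathcal C_b$ to $\mathcal C_a$. A translation of $\mathcal N$ is a tuple $\tilde{\mathcal N}=(\mathcal S,\tilde{\mathcal C},\mathcal{CR}_K,\tilde{\mathcal R})$, where $(\mathcal S,\tilde{\mathcal C},\tilde{\mathcal R})$ is a chemical reaction network with complexes $\tilde{\mathcal C}_j$ (vectors $\tilde y_j$), reactions $\tilde{\mathcal R}_l:\tilde{\mathcal C}_{\tilde\rho(l)}\to\tilde{\mathcal C}_{\tilde\rho'(l)}$ and reactant complex set $\tilde{\mathcal{CR}}$, and $\mathcal{CR}_K\subseteq\mathcal{CR}$, such that: (1) there is a bijection $h_1:\mathcal R\to\tilde{\mathcal R}$ with $\tilde y_{\tilde\rho'(h_1(i))}-\tilde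 y_{\tilde\rho(h_1(i))}=y_{\rho'(i)}-y_{\rho(i)}$ for all $i$; (2) there is a surjection $h_2:\mathcal{CR}\to\tilde{\mathcal{CR}}$ with $h_2(\rho(i))=\tilde\rho(h_1(i))$; (3) for each $j\in\tilde{\mathcal{CR}}$, $\mathcal{CR}_K$ contains exactly one element of $h_2^{-1}(j)$, denoted $\kappa(j)$ (the kinetic complex of $\tilde{\mathcal C}_j$); non-reactant complexes of $\tilde{\mathcal N}$ receive kinetic complexes $\kappa(j)\in\mathcal{CR}_K$ arbitrarily. The translation is proper if $h_2$ is injective, improper otherwise, and strong if $\tilde{\mathcal N}$ is weakly reversible. The kinetic-order subspace is $\tilde S=\mathrm{span}\{y_{\kappa(\tilde\rho'(l))}-y_{\kappa(\tilde\rho(l))}:\tilde{\mathcal R}_l\in\tilde{\mathcal R}\}$. A reaction $\mathcal R_i$ is improper if $\rho(i)\in\mathcal{CR}\setminus\mathcal{CR}_K$; $\mathcal R_I$ denotes the set of improper reactions. For any reaction, $\rho(i)_K$ denotes the unique element of $h_2^{-1}(h_2(\rho(i)))\cap\mathcal{CR}_K$ (the kinetically relevant complex). The improper kinetic subspace is $\tilde S_I=\mathrm{span}\{y_{\rho(i)}-y_{\rho(i)_K}: i\in\mathcal R_I\}$. An improper translation is weakly resolvable if it is strong and $\tilde S_I\subseteq\tilde S$. *)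

theory Defs
  imports "HOL-Analysis.Analysis"
begin

text \<open>Species are the elements of a finite type 'm; stoichiometric vectors are
  real vectors (with natural-number entries) indexed by 'm. Complexes are indexed by
  naturals j < n, reactions by naturals i < r; reaction i is rho i \<rightarrow> rho' i.\<close>

definition crn :: "nat \<Rightarrow> (nat \<Rightarrow> real^'m) \<Rightarrow> nat \<Rightarrow> (nat \<Rightarrow> nat) \<Rightarrow> (nat \<Rightarrow> nat) \<Rightarrow> bool" where
  "crn n y r rho rho' \<longleftrightarrow>
     (\<forall>j<n. \<forall>k. y j $ k \<in> \<nat>) \<and>
     inj_on y {..<n} \<and>
     (\<forall>i<r. rho i < n \<and> rho' i < n \<and> rho i \<noteq> rho' i) \<and>
     inj_on (\<lambda>i. (rho i, rho' i)) {..<r} \<and>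
     (\<forall>j<n. \<exists>i<r. rho i = j \<or> rho' i = j) \<and>
     (\<forall>k. \<exists>j<n. y j $ k \<noteq> 0)"

definition reactant_set :: "nat \<Rightarrow> (nat \<Rightarrow> nat) \<Rightarrow> nat set" where
  "reactant_set r rho = rho ` {..<r}"

definition rgraph :: "nat \<Rightarrow> (nat \<Rightarrow> nat) \<Rightarrow> (nat \<Rightarrow> nat) \<Rightarrow> (nat \<times> nat) set" where
  "rgraph r rho rho' = {(rho i, rho' i) | i. i < r}"

definition weakly_reversible :: "nat \<Rightarrow> (nat \<Rightarrow> nat) \<Rightarrow> (nat \<Rightarrow> nat) \<Rightarrow> bool" where
  "weakly_reversible r rho rho' \<longleftrightarrow> (\<forall>i<r. (rho' i, rho i) \<in> (rgraph r rho rho')\<^sup>*)"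

definition same_linkage :: "nat \<Rightarrow> (nat \<Rightarrow> nat) \<Rightarrow> (nat \<Rightarrow> nat) \<Rightarrow> nat \<Rightarrow> nat \<Rightarrow> bool" where
  "same_linkage r rho rho' a b \<longleftrightarrow>
     (a, b) \<in> (rgraph r rho rho' \<union> (rgraph r rho rho')\<inverse>)\<^sup>*"

text \<open>Translation (S, tilde C, CR_K, tilde R) of N, with maps h1, h2 and kinetic
  complex assignment kap (on complex indices of the translated network).\<close>
definition translation ::
  "nat \<Rightarrow> (nat \<Rightarrow> real^'m) \<Rightarrow> nat \<Rightarrow> (nat \<Rightarrow> nat) \<Rightarrow> (nat \<Rightarrow> nat) \<Rightarrow>
   nat \<Rightarrow> (nat \<Rightarrow> real^'m) \<Rightarrow> nat \<Rightarrow> (nat \<Rightarrow> nat) \<Rightarrow> (nat \<Rightarrow> nat) \<Rightarrow>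
   nat set \<Rightarrow> (nat \<Rightarrow> nat) \<Rightarrow> (nat \<Rightarrow> nat) \<Rightarrow> (nat \<Rightarrow> nat) \<Rightarrow> bool" where
  "translation n y r rho rho' nt yt rt rhot rhot' CRK h1 h2 kap \<longleftrightarrow>
     crn n y r rho rho' \<and> crn nt yt rt rhot rhot' \<and>
     bij_betw h1 {..<r} {..<rt} \<and>
     (\<forall>i<r. yt (rhot' (h1 i)) - yt (rhot (h1 i)) = y (rho' i) - y (rho i)) \<and>
     h2 ` reactant_set r rho = reactant_set rt rhot \<and>
     (\<forall>i<r. h2 (rho i) = rhot (h1 i)) \<and>
     CRK \<subseteq> reactant_set r rho \<and>
     (\<forall>j\<in>reactant_set rt rhot. kap j \<in> CRK \<and> h2 (kap j) = j \<and>
          (\<forall>p\<in>CRK. h2 p = j \<longrightarrow> p = kap j)) \<and>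
     (\<forall>j<nt. j \<notin> reactant_set rt rhot \<longrightarrow> kap j \<in> CRK)"

definition proper_translation :: "nat \<Rightarrow> (nat \<Rightarrow> nat) \<Rightarrow> (nat \<Rightarrow> nat) \<Rightarrow> bool" where
  "proper_translation r rho h2 \<longleftrightarrow> inj_on h2 (reactant_set r rho)"

definition kinetic_subspace ::
  "(nat \<Rightarrow> real^'m) \<Rightarrow> nat \<Rightarrow> (nat \<Rightarrow> nat) \<Rightarrow> (nat \<Rightarrow> nat) \<Rightarrow> (nat \<Rightarrow> nat) \<Rightarrow> (real^'m) set" where
  "kinetic_subspace y rt rhot rhot' kap =
     span {y (kap (rhot' l)) - y (kap (rhot l)) | l. l < rt}"

definition kin_rel_complex :: "nat set \<Rightarrow> (nat \<Rightarrow> nat) \<Rightarrow> nat \<Rightarrow> nat" where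
  "kin_rel_complex CRK h2 c = (THE p. p \<in> CRK \<and> h2 p = h2 c)"

definition improper_reactions :: "nat \<Rightarrow> (nat \<Rightarrow> nat) \<Rightarrow> nat set \<Rightarrow> nat set" where
  "improper_reactions r rho CRK = {i. i < r \<and> rho i \<notin> CRK}"

definition improper_kinetic_subspace ::
  "(nat \<Rightarrow> real^'m) \<Rightarrow> nat \<Rightarrow> (nat \<Rightarrow> nat) \<Rightarrow> nat set \<Rightarrow> (nat \<Rightarrow> nat) \<Rightarrow> (real^'m) set" where
  "improper_kinetic_subspace y r rho CRK h2 =
     span {y (rho i) - y (kin_rel_complex CRK h2 (rho i)) | i. i \<in> improper_reactions r rho CRK}"

definition weakly_resolvable ::
  "nat \<Rightarrow> (nat \<Rightarrow> real^'m) \<Rightarrow> nat \<Rightarrow> (nat \<Rightarrow> nat) \<Rightarrow> (nat \<Rightarrow> nat) \<Rightarrow>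
   nat \<Rightarrow> (nat \<Rightarrow> real^'m) \<Rightarrow> nat \<Rightarrow> (nat \<Rightarrow> nat) \<Rightarrow> (nat \<Rightarrow> nat) \<Rightarrow>
   nat set \<Rightarrow> (nat \<Rightarrow> nat) \<Rightarrow> (nat \<Rightarrow> nat) \<Rightarrow> (nat \<Rightarrow> nat) \<Rightarrow> bool" where
  "weakly_resolvable n y r rho rho' nt yt rt rhot rhot' CRK h1 h2 kap \<longleftrightarrow>
     translation n y r rho rho' nt yt rt rhot rhot' CRK h1 h2 kap \<and>
     \<not> proper_translation r rho h2 \<and>
     weakly_reversible rt rhot rhot' \<and>
     improper_kinetic_subspace y r rho CRK h2 \<subseteq> kinetic_subspace y rt rhot rhot' kap"

definition monomial :: "real^'m \<Rightarrow> real^'m \<Rightarrow> real" where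
  "monomial x v = (\<Prod>k\<in>UNIV. (x $ k) powr (v $ k))"

end

theory Submission
  imports Defs
begin

text \<open>On the positive orthant, taking logarithms turns the monomial x^v into the linear
  functional v \<mapsto> v \<bullet> ln x. Weak resolvability places y(\<rho> i) - y(\<rho> i)_K in the
  kinetic-order subspace, so it is a linear combination \<Sum> c_j (y(p_j) - y(q_j)) of the
  basis vectors; exponentiating this identity gives the claimed factorisation.\<close>

lemma monomial_eq_exp_inner:
  assumes "\<forall>k. 0 < x $ k"
  shows "monomial x v = exp (v \<bullet> (\<chi> k. ln (x $ k)))"
proof -
  have "monomial x v = (\<Prod>k\<in>UNIV. exp (v $ k * ln (x $ k)))"
    unfolding monomial_def using assms
    by (intro prod.cong) (auto simp: powr_def mult.commute less_le)
  then show ?thesis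
    by (simp add: inner_vec_def exp_sum)
qed

lemma monomial_add:
  assumes "\<forall>k. 0 < x $ k"
  shows "monomial x (a + b) = monomial x a * monomial x b"
  using assms by (simp add: monomial_eq_exp_inner inner_add_left exp_add)

lemma monomial_diff:
  assumes "\<forall>k. 0 < x $ k"
  shows "monomial x (a - b) = monomial x a / monomial x b"
  using assms by (simp add: monomial_eq_exp_inner inner_diff_left exp_diff)

lemma monomial_sum_scaleR:
  assumes "\<forall>k. 0 < x $ k"
  shows "monomial x (\<Sum>j\<in>A. c j *\<^sub>R d j) = (\<Prod>j\<in>A. monomial x (d j) powr c j)"
  using assms
  by (cases "finite A") (simp_all add: monomial_eq_exp_inner inner_sum_left exp_sum powr_def mult.commute)

lemma span_image_eq_sum:
  assumes "finite A" and "v \<in> span (d ` A)"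
  shows "\<exists>c. v = (\<Sum>j\<in>A. c j *\<^sub>R d j)"
  using assms
proof (induction A arbitrary: v rule: finite_induct)
  case empty
  then show ?case by simp
next
  case (insert a A)
  then obtain k where "v - k *\<^sub>R d a \<in> span (d ` A)"
    using span_breakdown_eq[of v "d a" "d ` A"] by auto
  with insert.IH obtain c where c: "v - k *\<^sub>R d a = (\<Sum>j\<in>A. c j *\<^sub>R d j)"
    by blast
  have "v = (\<Sum>j\<in>insert a A. (c(a := k)) j *\<^sub>R d j)"
    using c insert.hyps by (auto simp: algebra_simps intro!: sum.cong)
  then show ?case by blast
qed

lemma improper_difference_in_kinetic_subspace:
  assumes "weakly_resolvable n y r rho rho' nt yt rt rhot rhot' CRK h1 h2 kap"
    and "i \<in> improper_reactions r rho CRK"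
  shows "y (rho i) - y (kin_rel_complex CRK h2 (rho i)) \<in> kinetic_subspace y rt rhot rhot' kap"
proof -
  have "y (rho i) - y (kin_rel_complex CRK h2 (rho i)) \<in> improper_kinetic_subspace y r rho CRK h2"
    unfolding improper_kinetic_subspace_def using assms(2) by (intro span_base) blast
  with assms(1) show ?thesis
    unfolding weakly_resolvable_def by blast
qed

theorem lemma4p2:
  fixes y yt :: "nat \<Rightarrow> real^'m"
    and n r nt rt s i :: nat
    and rho rho' rhot rhot' h1 h2 kap p q :: "nat \<Rightarrow> nat"
    and CRK :: "nat set"
  assumes wr: "weakly_resolvable n y r rho rho' nt yt rt rhot rhot' CRK h1 h2 kap"
    and pq: "\<forall>j<s. p j \<in> CRK \<and> q j \<in> CRK \<and> same_linkage rt rhot rhot' (h2 (p j)) (h2 (q j))"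
    and inj: "inj_on (\<lambda>j. y (p j) - y (q j)) {..<s}"
    and indep: "independent ((\<lambda>j. y (p j) - y (q j)) ` {..<s})"
    and spans: "span ((\<lambda>j. y (p j) - y (q j)) ` {..<s}) = kinetic_subspace y rt rhot rhot' kap"
    and i: "i \<in> improper_reactions r rho CRK"
  shows "\<exists>c :: nat \<Rightarrow> real. \<forall>x :: real^'m. (\<forall>k. 0 < x $ k) \<longrightarrow>
           monomial x (y (rho i)) =
             (\<Prod>j<s. (monomial x (y (p j)) / monomial x (y (q j))) powr (c j))
             * monomial x (y (kin_rel_complex CRK h2 (rho i)))"
proof -
  let ?K = "kin_rel_complex CRK h2 (rho i)"
  obtain c where c: "y (rho i) - y ?K = (\<Sum>j<s. c j *\<^sub>R (y (p j) - y (q j)))"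
    using span_image_eq_sum[of "{..<s}" "y (rho i) - y ?K"]
      improper_difference_in_kinetic_subspace[OF wr i] spans
    by auto
  have "monomial x (y (rho i)) =
          (\<Prod>j<s. (monomial x (y (p j)) / monomial x (y (q j))) powr (c j)) * monomial x (y ?K)"
    if x: "\<forall>k. 0 < x $ k" for x
  proof -
    have "monomial x (y (rho i)) = monomial x (y (rho i) - y ?K) * monomial x (y ?K)"
      using monomial_add[OF x, of "y (rho i) - y ?K" "y ?K"] by simp
    then show ?thesis
      by (simp only: c monomial_sum_scaleR[OF x] monomial_diff[OF x])
  qed
  then show ?thesis by blast
qed

end
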